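(* For all $A,B\in\mathcal A_n(\Bbbk)$ one has $\varphi(A)\,\varphi(B)=\varphi(AB)$ in $A_n(\Bbbk)$; i.e. $\varphi:\mathcal A_n(\Bbbk)\to A_n(\Bbbk)$ is a monoid homomorphism (from matrix multiplication to multiplication in $A_n(\Bbbk)$).
   Context: Let $\Bbbk$ be a field of characteristic zero and $h$ a formal variable. $A_n(\Bbbk)$ denotes the $n$-th Weyl–Heisenberg algebra over $\Bbbk\llbracket h\rrbracket$ ($h$-adically completed), generated by $\mathbf{x}_i,\mathbf{p}_i$ ($1\le i\le n$) with $[\mathbf{x}_i,\mathbf{x}_j]=[\mathbf{p}_i,\mathbf{p}_j]=0$, $[\mathbf{p}_i,\mathbf{x}_j]=\delta_{ij}$. The normal ordering map $\mathcal N$ is the $\Bbbk\llbracket h\rrbracket$-linear, $h$-adically continuous map from the commutative ring $\Bbbk\llbracket h\rrbracket[x_1,\dots,x_n,p_1,\dots,p_n]$ (completed) to $A_n(\Bbbk)$ sending $\prod_i x_i^{\alpha_i}p_i^{\beta_i}\mapsto(\prod_i\mathbf{x}_i^{\alpha_i})(\prod_j\mathbf{p}_j^{\beta_j})$. Let $\mathcal A_n(\Bbbk):=\{\exp(hX):X\in\mathrm{Mat}_n(\Bbbk\llbracket h\rrbracket)\}$, a monoid under matrix multiplication, and define $\varphi:\mathcal A_n(\Bbbk)\to A_n(\Bbbk)$ by $\varphi(A)=\mathcal N\big(\exp(x^{\top}(A-\mathbf 1)p)\big)$, where $x^{\top}(A-\mathbf1)p=\sum_{k,l}x_k(A-\mathbf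 1)_{kl}p_l$. *)

theory Defs
  imports "HOL-Analysis.Analysis" "HOL-Library.Poly_Mapping"
          "HOL-Computational_Algebra.Formal_Power_Series"
begin

text \<open>Variables: x_i is Inl i, p_i is Inr i, for i in the finite index type 'n (n = CARD('n)).
  The h-adically completed ring k[[h]][x,p]: formal power series in h with polynomial
  coefficients.\<close>

type_synonym 'n xpmono = "('n + 'n) \<Rightarrow>\<^sub>0 nat"
type_synonym ('n, 'k) xppoly = "(('n + 'n) \<Rightarrow>\<^sub>0 nat) \<Rightarrow>\<^sub>0 'k"
type_synonym ('n, 'k) hxp = "((('n + 'n) \<Rightarrow>\<^sub>0 nat) \<Rightarrow>\<^sub>0 'k) fps"

text \<open>The Weyl--Heisenberg algebra A_n(k) is represented in its normally ordered (PBW) basis: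
  the element with coordinates c is sum of c(d,m) h^d x^alpha p^beta, where
  alpha i = m(Inl i), beta i = m(Inr i), and the x's stand to the left of the p's.
  The product is given by the normal-ordering rule
  x^a p^b * x^c p^e = sum_{kappa <= min(b,c)} prod_i kappa_i! C(b_i,kappa_i) C(c_i,kappa_i)
                        x^(a+c-kappa) p^(b+e-kappa),
  which is the consequence of [p_i,x_j] = delta_ij, [x_i,x_j]=[p_i,p_j]=0.\<close>

definition weyl_kappas :: "'n::finite xpmono \<Rightarrow> 'n xpmono \<Rightarrow> ('n \<Rightarrow> nat) set" where
  "weyl_kappas a b = {\<kappa>. \<forall>i. \<kappa> i \<le> min (Poly_Mapping.lookup a (Inr i)) (Poly_Mapping.lookup b (Inl i))}"

definition weyl_res_mono :: "'n::finite xpmono \<Rightarrow> 'n xpmono \<Rightarrow> ('n \<Rightarrow> nat) \<Rightarrow> 'n xpmono" where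
  "weyl_res_mono a b \<kappa> =
     (\<Sum>i\<in>UNIV. Poly_Mapping.single (Inl i) (Poly_Mapping.lookup a (Inl i) + Poly_Mapping.lookup b (Inl i) - \<kappa> i)
             + Poly_Mapping.single (Inr i) (Poly_Mapping.lookup a (Inr i) + Poly_Mapping.lookup b (Inr i) - \<kappa> i))"

definition weyl_coeff :: "'n::finite xpmono \<Rightarrow> 'n xpmono \<Rightarrow> ('n \<Rightarrow> nat) \<Rightarrow> nat" where
  "weyl_coeff a b \<kappa> =
     (\<Prod>i\<in>UNIV. fact (\<kappa> i) * (Poly_Mapping.lookup a (Inr i) choose \<kappa> i) * (Poly_Mapping.lookup b (Inl i) choose \<kappa> i))"

definition weyl_poly_mult :: "('n::finite, 'k::comm_ring_1) xppoly \<Rightarrow> ('n, 'k) xppoly \<Rightarrow> ('n, 'k) xppoly" where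
  "weyl_poly_mult f g =
     (\<Sum>a\<in>Poly_Mapping.keys f. \<Sum>b\<in>Poly_Mapping.keys g. \<Sum>\<kappa>\<in>weyl_kappas a b.
        Poly_Mapping.single (weyl_res_mono a b \<kappa>)
          (Poly_Mapping.lookup f a * Poly_Mapping.lookup g b * of_nat (weyl_coeff a b \<kappa>)))"

definition weyl_mult :: "('n::finite, 'k::comm_ring_1) hxp \<Rightarrow> ('n, 'k) hxp \<Rightarrow> ('n, 'k) hxp" where
  "weyl_mult F G = Abs_fps (\<lambda>d. \<Sum>i\<le>d. weyl_poly_mult (fps_nth F i) (fps_nth G (d - i)))"

text \<open>In the chosen
  representation of A_n(k) by normally ordered coordinates, N sends the commutative monomial
  x^alpha p^beta to the basis element x^alpha p^beta, i.e. it is the identity on coordinates.\<close>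
definition normal_order :: "('n, 'k) hxp \<Rightarrow> ('n, 'k) hxp" where
  "normal_order F = F"

text \<open>Exponential in the commutative completed ring, for y with zero h^0-part (y in h R):
  exp y = sum_m y^m / m!, whose h^d coefficient only involves m \<le> d.\<close>
definition hexp_comm :: "('n, 'k::field_char_0) hxp \<Rightarrow> ('n, 'k) hxp" where
  "hexp_comm y = Abs_fps (\<lambda>d. \<Sum>m\<le>d. Poly_Mapping.single 0 (inverse (fact m)) * (fps_nth (y ^ m) d))"

text \<open>The matrix power X^m is ((**) X ^^ m) (mat 1). The matrix exponential exp(hX) for X in Mat_n(k[[h]]): sum_m h^m X^m / m!.\<close>
definition exp_hmat :: "'k::field_char_0 fps ^ 'n ^ 'n \<Rightarrow> 'k fps ^ 'n ^ 'n" where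
  "exp_hmat X = (\<chi> i j. Abs_fps (\<lambda>d. \<Sum>m\<le>d. fps_nth (((((**) X) ^^ m) (mat 1)) $ i $ j) (d - m) / fact m))"

definition scal_emb :: "'k::comm_ring_1 fps \<Rightarrow> ('n, 'k) hxp" where
  "scal_emb c = Abs_fps (\<lambda>d. Poly_Mapping.single 0 (fps_nth c d))"

definition xp_mono :: "'n \<Rightarrow> 'n \<Rightarrow> ('n, 'k::comm_ring_1) hxp" where
  "xp_mono k l = fps_const (Poly_Mapping.single
      (Poly_Mapping.single (Inl k) 1 + Poly_Mapping.single (Inr l) 1) 1)"

definition quad_form :: "'k::comm_ring_1 fps ^ 'n::finite ^ 'n \<Rightarrow> ('n, 'k) hxp" where
  "quad_form A = (\<Sum>k\<in>UNIV. \<Sum>l\<in>UNIV. xp_mono k l * scal_emb ((A - mat 1) $ k $ l))"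

definition phi :: "'k::field_char_0 fps ^ 'n::finite ^ 'n \<Rightarrow> ('n, 'k) hxp" where
  "phi A = normal_order (hexp_comm (quad_form A))"

end

theory Submission
  imports Defs
begin

text \<open>
  Write \<open>\<phi>(A) = exp (x\<^sup>T M p)\<close> with \<open>M = A - 1\<close>, which vanishes modulo \<open>h\<close>.
  On normally ordered coordinates the Weyl product is Wick's formula
  \<open>f \<star> g = \<Sum>\<^sub>\<kappa> (1/\<kappa>!) \<partial>\<^sub>p\<^sup>\<kappa> f \<cdot> \<partial>\<^sub>x\<^sup>\<kappa> g\<close>. Because \<open>x\<^sup>T M p\<close> is linear in \<open>p\<close>,
  \<open>\<partial>\<^sub>p\<^sup>\<kappa> exp (x\<^sup>T M p) = (x\<^sup>T M)\<^sup>\<kappa> exp (x\<^sup>T M p)\<close>, and likewise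
  \<open>\<partial>\<^sub>x\<^sup>\<kappa> exp (x\<^sup>T N p) = (N p)\<^sup>\<kappa> exp (x\<^sup>T N p)\<close>. Summing over \<open>\<kappa>\<close> gives
  \<open>exp (\<Sum>\<^sub>l (x\<^sup>T M)\<^sub>l (N p)\<^sub>l) exp (x\<^sup>T M p) exp (x\<^sup>T N p) = exp (x\<^sup>T (M + N + M N) p)\<close>,
  and \<open>M + N + M N = A B - 1\<close>. All exponentials converge \<open>h\<close>-adically since their
  arguments vanish modulo \<open>h\<close>; identities between them are verified modulo every power
  of \<open>h\<close> by comparison with truncated exponentials.
\<close>

notation fps_nth (infixl \<open>$$\<close> 75) \<comment> \<open>\<open>$\<close> is ambiguous with vector indexing from HOL-Analysis\<close>

lemma poly_mapping_sum_single:
  "p = (\<Sum>a\<in>Poly_Mapping.keys p. Poly_Mapping.single a (Poly_Mapping.lookup p a))"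
  by (rule poly_mapping_eqI) (auto simp: lookup_sum lookup_single when_def in_keys_iff)

lemma single_sum: "Poly_Mapping.single k (\<Sum>x\<in>S. f x) = (\<Sum>x\<in>S. Poly_Mapping.single k (f x))"
  by (induction S rule: infinite_finite_induct) (simp_all add: single_add)

lemma prod_UNIV_sum:
  "(\<Prod>v\<in>(UNIV::('a::finite + 'b::finite) set). f v) = (\<Prod>i\<in>UNIV. f (Inl i)) * (\<Prod>j\<in>UNIV. f (Inr j))"
  by (simp add: UNIV_Plus_UNIV[symmetric] prod.Plus del: UNIV_Plus_UNIV)

lemma fact_mult_pochhammer: "fact n * pochhammer (n + 1) k = (fact (n + k) :: nat)"
  unfolding pochhammer_fact pochhammer_product' by (simp add: add.commute)

lemma pochhammer_eq_fact_binomial: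
  assumes "k \<le> n"
  shows "pochhammer (Suc (n - k)) k = fact k * (n choose k)"
proof -
  have "fact (n - k) * pochhammer (Suc (n - k)) k = fact n"
    using fact_mult_pochhammer[of "n - k" k] assms by simp
  also have "\<dots> = fact (n - k) * (fact k * (n choose k))"
    using binomial_fact_lemma[OF assms] by (simp add: algebra_simps)
  finally show ?thesis by simp
qed

lemma finite_nat_fun_induct [case_names zero incr]:
  fixes \<mu> :: "'v::finite \<Rightarrow> nat"
  assumes zero: "P (\<lambda>_. 0)" and incr: "\<And>\<mu> v. P \<mu> \<Longrightarrow> P (\<mu>(v := Suc (\<mu> v)))"
  shows "P \<mu>"
proof (induction "sum \<mu> UNIV" arbitrary: \<mu>)
  case 0
  then have "\<mu> = (\<lambda>_. 0)"
    by (simp add: fun_eq_iff)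
  with zero show ?case
    by simp
next
  case (Suc n)
  then obtain v where v: "\<mu> v \<noteq> 0"
    by (metis sum.neutral nat.distinct(1))
  define \<mu>' where "\<mu>' = \<mu>(v := \<mu> v - 1)"
  have "sum \<mu> UNIV = \<mu> v + sum \<mu> (UNIV - {v})" and "sum \<mu>' UNIV = \<mu>' v + sum \<mu>' (UNIV - {v})"
    by (simp_all add: sum.remove)
  moreover have "sum \<mu>' (UNIV - {v}) = sum \<mu> (UNIV - {v})"
    by (intro sum.cong) (auto simp: \<mu>'_def)
  ultimately have "n = sum \<mu>' UNIV"
    using Suc.hyps(2) v by (simp add: \<mu>'_def)
  then have "P \<mu>'"
    by (rule Suc.hyps(1))
  moreover have "\<mu> = \<mu>'(v := Suc (\<mu>' v))"
    using v by (auto simp: \<mu>'_def)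
  ultimately show ?case
    using incr by metis
qed

lemma prod_power_fun_upd_Suc:
  fixes \<mu> :: "'v::finite \<Rightarrow> nat"
  shows "(\<Prod>w\<in>UNIV. g w ^ (\<mu>(v := Suc (\<mu> v))) w) = (\<Prod>w\<in>UNIV. g w ^ \<mu> w) * (g v :: 'a::comm_monoid_mult)"
proof -
  have "g w ^ (\<mu>(v := Suc (\<mu> v))) w = g w ^ \<mu> w * (if w = v then g w else 1)" for w
    by (simp add: mult.commute)
  then show ?thesis
    by (simp add: prod.distrib prod.delta)
qed

lemma dvd_diff_mult:
  fixes d :: "'a::comm_ring_1"
  assumes "d dvd a - a'" "d dvd b - b'"
  shows "d dvd a * b - a' * b'"
proof -
  have "a * b - a' * b' = a * (b - b') + (a - a') * b'"
    by (simp add: algebra_simps)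
  then show ?thesis
    using assms by (simp add: dvd_add dvd_mult dvd_mult2)
qed

lemma dvd_diff_commute: "(d :: 'a::comm_ring_1) dvd a - b \<Longrightarrow> d dvd b - a"
  by (metis dvd_minus_iff minus_diff_eq)

lemma dvd_diff_trans: "(d :: 'a::comm_ring_1) dvd a - b \<Longrightarrow> d dvd b - c \<Longrightarrow> d dvd a - c"
  by (metis diff_add_cancel add_diff_eq diff_diff_eq2 dvd_add)

lemma dvd_diff_prod:
  fixes d :: "'a::comm_ring_1"
  assumes "\<And>x. x \<in> S \<Longrightarrow> d dvd f x - g x"
  shows "d dvd (\<Prod>x\<in>S. f x) - (\<Prod>x\<in>S. g x)"
  using assms by (induction S rule: infinite_finite_induct) (auto intro: dvd_diff_mult)

lemma fps_X_power_dvd_iff: "fps_X ^ n dvd (f :: 'a::comm_ring_1 fps) \<longleftrightarrow> (\<forall>k<n. f $$ k = 0)"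
proof
  assume "fps_X ^ n dvd f"
  then show "\<forall>k<n. f $$ k = 0"
    by (auto simp: fps_X_power_mult_nth)
next
  assume "\<forall>k<n. f $$ k = 0"
  then have "fps_cutoff n f = 0"
    by (simp add: fps_eq_iff)
  then have "f = fps_X ^ n * fps_shift n f"
    using fps_shift_cutoff'[of n f] by simp
  then show "fps_X ^ n dvd f"
    by (rule dvdI)
qed

lemma fps_X_power_dvd_power: "(f :: 'a::comm_ring_1 fps) $$ 0 = 0 \<Longrightarrow> fps_X ^ n dvd f ^ n"
  using fps_X_power_dvd_iff[of 1 f] by (simp add: dvd_power_same)

lemma fps_eq_if_X_power_dvd_diff:
  fixes f g :: "'a::comm_ring_1 fps"
  assumes "\<And>n. fps_X ^ n dvd f - g"
  shows "f = g"
proof (rule fps_ext)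
  fix k
  have "(f - g) $$ k = 0"
    using assms[of "Suc k"] fps_X_power_dvd_iff[of "Suc k" "f - g"] by blast
  then show "f $$ k = g $$ k"
    by simp
qed

lemma fps_mult_nth_eq_if_X_power_dvd_diff:
  fixes f g h :: "'a::comm_ring_1 fps"
  assumes "fps_X ^ n dvd f - g" and "k < n"
  shows "(f * h) $$ k = (g * h) $$ k"
proof -
  have "fps_X ^ n dvd (f - g) * h"
    using assms(1) by (rule dvd_mult2)
  then have "((f - g) * h) $$ k = 0"
    using assms(2) by (simp add: fps_X_power_dvd_iff)
  then show ?thesis
    by (simp add: left_diff_distrib)
qed

section \<open>Partial derivatives\<close>

definition pm_of_fun :: "('v::finite \<Rightarrow> nat) \<Rightarrow> 'v \<Rightarrow>\<^sub>0 nat" where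
  "pm_of_fun \<mu> = Abs_poly_mapping \<mu>"

lemma lookup_pm_of_fun [simp]: "Poly_Mapping.lookup (pm_of_fun \<mu>) = \<mu>"
  unfolding pm_of_fun_def by (rule lookup_Abs_poly_mapping) simp

lemma pm_of_fun_add: "pm_of_fun (\<lambda>v. \<mu> v + \<nu> v) = pm_of_fun \<mu> + pm_of_fun \<nu>"
  by (rule poly_mapping_eqI) (simp add: lookup_add)

lemma pm_of_fun_zero [simp]: "pm_of_fun (\<lambda>_. 0) = 0"
  by (rule poly_mapping_eqI) simp

definition unit_index :: "'v \<Rightarrow> 'v \<Rightarrow> nat" where
  "unit_index v = (\<lambda>w. if w = v then 1 else 0)"

lemma pm_of_fun_unit_index [simp]: "pm_of_fun (unit_index v) = Poly_Mapping.single v 1"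
  by (rule poly_mapping_eqI) (simp add: unit_index_def lookup_single when_def)

text \<open>
  \<open>\<partial>\<^sup>\<mu> x\<^sup>m\<^sup>+\<^sup>\<mu> = ((m + \<mu>)! / m!) x\<^sup>m\<close>, and \<open>(m + \<mu>)! / m!\<close> is the rising factorial
  \<^term>\<open>pochhammer (m + 1) \<mu>\<close>, taken componentwise.
\<close>

definition partial_deriv ::
    "('v::finite \<Rightarrow> nat) \<Rightarrow> (('v \<Rightarrow>\<^sub>0 nat) \<Rightarrow>\<^sub>0 'k::comm_semiring_1) \<Rightarrow> ('v \<Rightarrow>\<^sub>0 nat) \<Rightarrow>\<^sub>0 'k" where
  "partial_deriv \<mu> f = Abs_poly_mapping (\<lambda>m.
     of_nat (\<Prod>v\<in>UNIV. pochhammer (Poly_Mapping.lookup m v + 1) (\<mu> v)) * Poly_Mapping.lookup f (m + pm_of_fun \<mu>))"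

lemma lookup_partial_deriv:
  "Poly_Mapping.lookup (partial_deriv \<mu> f) m =
     of_nat (\<Prod>v\<in>UNIV. pochhammer (Poly_Mapping.lookup m v + 1) (\<mu> v)) * Poly_Mapping.lookup f (m + pm_of_fun \<mu>)"
proof -
  have "{m. Poly_Mapping.lookup f (m + pm_of_fun \<mu>) \<noteq> 0} \<subseteq> (\<lambda>a. a - pm_of_fun \<mu>) ` Poly_Mapping.keys f"
    by (force simp: in_keys_iff)
  then have "finite {m. Poly_Mapping.lookup f (m + pm_of_fun \<mu>) \<noteq> 0}"
    by (rule finite_subset) simp
  then have "finite {m. of_nat (\<Prod>v\<in>UNIV. pochhammer (Poly_Mapping.lookup m v + 1) (\<mu> v))
                        * Poly_Mapping.lookup f (m + pm_of_fun \<mu>) \<noteq> (0::'a)}"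
    by (rule rev_finite_subset) auto
  then show ?thesis
    unfolding partial_deriv_def by simp
qed

lemma partial_deriv_add: "partial_deriv \<mu> (f + g) = partial_deriv \<mu> f + partial_deriv \<mu> g"
  by (rule poly_mapping_eqI) (simp add: lookup_partial_deriv lookup_add algebra_simps)

lemma partial_deriv_zero [simp]: "partial_deriv \<mu> 0 = 0"
  by (rule poly_mapping_eqI) (simp add: lookup_partial_deriv)

lemma partial_deriv_sum: "partial_deriv \<mu> (sum f S) = (\<Sum>x\<in>S. partial_deriv \<mu> (f x))"
  by (induction S rule: infinite_finite_induct) (auto simp: partial_deriv_add)

lemma partial_deriv_order_0 [simp]: "partial_deriv (\<lambda>_. 0) f = f"
  by (rule poly_mapping_eqI) (simp add: lookup_partial_deriv)

lemma partial_deriv_partial_deriv: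
  "partial_deriv \<mu> (partial_deriv \<nu> f) = partial_deriv (\<lambda>v. \<mu> v + \<nu> v) f"
  by (rule poly_mapping_eqI)
    (simp add: lookup_partial_deriv lookup_add pm_of_fun_add add.assoc pochhammer_product'
      prod.distrib algebra_simps)

lemma partial_deriv_single:
  "partial_deriv \<mu> (Poly_Mapping.single a c) =
    (if \<forall>v. \<mu> v \<le> Poly_Mapping.lookup a v
     then Poly_Mapping.single (a - pm_of_fun \<mu>)
            (of_nat (\<Prod>v\<in>UNIV. pochhammer (Poly_Mapping.lookup a v - \<mu> v + 1) (\<mu> v)) * c)
     else 0)" (is "_ = ?rhs")
proof (rule poly_mapping_eqI)
  fix m
  show "Poly_Mapping.lookup (partial_deriv \<mu> (Poly_Mapping.single a c)) m = Poly_Mapping.lookup ?rhs m"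
  proof (cases "a = m + pm_of_fun \<mu>")
    case True
    then show ?thesis by (simp add: lookup_partial_deriv lookup_add)
  next
    case False
    have "a - pm_of_fun \<mu> \<noteq> m" if "\<forall>v. \<mu> v \<le> Poly_Mapping.lookup a v"
    proof
      assume "a - pm_of_fun \<mu> = m"
      with that have "a = m + pm_of_fun \<mu>"
        by (auto intro!: poly_mapping_eqI simp: lookup_add lookup_minus)
      with False show False by simp
    qed
    with False show ?thesis by (auto simp: lookup_partial_deriv lookup_single when_def)
  qed
qed

lemma partial_deriv1_single:
  "partial_deriv (unit_index v) (Poly_Mapping.single a c) =
     Poly_Mapping.single (a - Poly_Mapping.single v 1) (of_nat (Poly_Mapping.lookup a v) * c)"
proof (cases "Poly_Mapping.lookup a v = 0")
  case True
  then have not_le: "\<not> (\<forall>w. unit_index v w \<le> Poly_Mapping.lookup a w)"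
    by (auto simp: unit_index_def intro!: exI[of _ v])
  with True show ?thesis
    by (simp only: partial_deriv_single not_le if_False) simp
next
  case False
  then have "\<forall>w. unit_index v w \<le> Poly_Mapping.lookup a w"
    by (auto simp: unit_index_def)
  moreover have "(\<Prod>w\<in>UNIV. pochhammer (Poly_Mapping.lookup a w - unit_index v w + 1) (unit_index v w)) =
      Poly_Mapping.lookup a v"
    using False by (subst prod.remove[of _ v]) (auto simp: unit_index_def)
  ultimately show ?thesis by (simp add: partial_deriv_single)
qed

lemma partial_deriv1_mult_single:
  "partial_deriv (unit_index v) (Poly_Mapping.single a c * Poly_Mapping.single b d) =
    partial_deriv (unit_index v) (Poly_Mapping.single a c) * Poly_Mapping.single b d +
    Poly_Mapping.single a c * partial_deriv (unit_index v) (Poly_Mapping.single b d)"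
proof -
  let ?e = "Poly_Mapping.single v (1::nat)"
  have a: "a + b - ?e = a - ?e + b" if "Poly_Mapping.lookup a v \<noteq> 0"
    using that by (intro poly_mapping_eqI) (auto simp: lookup_add lookup_minus lookup_single when_def)
  have b: "a + b - ?e = a + (b - ?e)" if "Poly_Mapping.lookup b v \<noteq> 0"
    using that by (intro poly_mapping_eqI) (auto simp: lookup_add lookup_minus lookup_single when_def)
  consider "Poly_Mapping.lookup a v = 0" "Poly_Mapping.lookup b v = 0"
    | "Poly_Mapping.lookup a v \<noteq> 0" "Poly_Mapping.lookup b v = 0"
    | "Poly_Mapping.lookup a v = 0" "Poly_Mapping.lookup b v \<noteq> 0"
    | "Poly_Mapping.lookup a v \<noteq> 0" "Poly_Mapping.lookup b v \<noteq> 0"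
    by blast
  then show ?thesis
  proof cases
    case 1
    then show ?thesis by (simp add: mult_single partial_deriv1_single lookup_add)
  next
    case 2
    then show ?thesis
      unfolding mult_single partial_deriv1_single a[OF 2(1)] by (simp add: lookup_add mult.assoc)
  next
    case 3
    then show ?thesis
      unfolding mult_single partial_deriv1_single b[OF 3(2)] by (simp add: lookup_add mult.left_commute)
  next
    case 4
    then show ?thesis
      unfolding mult_single partial_deriv1_single a[OF 4(1), symmetric] b[OF 4(2), symmetric]
        single_add[symmetric]
      by (simp add: lookup_add algebra_simps)
  qed
qed

lemma partial_deriv1_mult:
  "partial_deriv (unit_index v) (f * g) =
     partial_deriv (unit_index v) f * g + f * partial_deriv (unit_index v) g"
proof -
  let ?D = "partial_deriv (unit_index v)"
  let ?f = "\<lambda>a. Poly_Mapping.single a (Poly_Mapping.lookup f a)"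
  let ?g = "\<lambda>b. Poly_Mapping.single b (Poly_Mapping.lookup g b)"
  have f: "f = (\<Sum>a\<in>Poly_Mapping.keys f. ?f a)" and g: "g = (\<Sum>b\<in>Poly_Mapping.keys g. ?g b)"
    by (rule poly_mapping_sum_single)+
  have "?D (f * g) = (\<Sum>a\<in>Poly_Mapping.keys f. \<Sum>b\<in>Poly_Mapping.keys g. ?D (?f a * ?g b))"
    by (subst f, subst g) (simp only: sum_product partial_deriv_sum)
  also have "\<dots> = (\<Sum>a\<in>Poly_Mapping.keys f. \<Sum>b\<in>Poly_Mapping.keys g. ?D (?f a) * ?g b + ?f a * ?D (?g b))"
    by (simp only: partial_deriv1_mult_single)
  also have "\<dots> = ?D (\<Sum>a\<in>Poly_Mapping.keys f. ?f a) * (\<Sum>b\<in>Poly_Mapping.keys g. ?g b)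
      + (\<Sum>a\<in>Poly_Mapping.keys f. ?f a) * ?D (\<Sum>b\<in>Poly_Mapping.keys g. ?g b)"
    by (simp only: sum.distrib sum_product partial_deriv_sum)
  also have "\<dots> = ?D f * g + f * ?D g"
    by (simp only: f[symmetric] g[symmetric])
  finally show ?thesis .
qed

definition fps_partial_deriv ::
    "('v::finite \<Rightarrow> nat) \<Rightarrow> (('v \<Rightarrow>\<^sub>0 nat) \<Rightarrow>\<^sub>0 'k::comm_semiring_1) fps \<Rightarrow> (('v \<Rightarrow>\<^sub>0 nat) \<Rightarrow>\<^sub>0 'k) fps" where
  "fps_partial_deriv \<mu> F = Abs_fps (\<lambda>n. partial_deriv \<mu> (F $$ n))"

lemma fps_partial_deriv_nth [simp]: "fps_partial_deriv \<mu> F $$ n = partial_deriv \<mu> (F $$ n)"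
  by (simp add: fps_partial_deriv_def)

lemma fps_partial_deriv_add: "fps_partial_deriv \<mu> (F + G) = fps_partial_deriv \<mu> F + fps_partial_deriv \<mu> G"
  by (rule fps_ext) (simp add: partial_deriv_add)

lemma fps_partial_deriv_zero [simp]: "fps_partial_deriv \<mu> 0 = 0"
  by (rule fps_ext) simp

lemma fps_partial_deriv_sum: "fps_partial_deriv \<mu> (sum F S) = (\<Sum>x\<in>S. fps_partial_deriv \<mu> (F x))"
  by (induction S rule: infinite_finite_induct) (auto simp: fps_partial_deriv_add)

lemma fps_partial_deriv_diff:
  "fps_partial_deriv \<mu> (F - G) = fps_partial_deriv \<mu> F - (fps_partial_deriv \<mu> G :: (('v::finite \<Rightarrow>\<^sub>0 nat) \<Rightarrow>\<^sub>0 'k::comm_ring_1) fps)"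
  by (metis add_diff_cancel_right' diff_add_cancel fps_partial_deriv_add)

lemma fps_partial_deriv_order_0 [simp]: "fps_partial_deriv (\<lambda>_. 0) F = F"
  by (rule fps_ext) simp

lemma fps_partial_deriv_fps_partial_deriv:
  "fps_partial_deriv \<mu> (fps_partial_deriv \<nu> F) = fps_partial_deriv (\<lambda>v. \<mu> v + \<nu> v) F"
  by (rule fps_ext) (simp add: partial_deriv_partial_deriv)

lemma fps_partial_deriv1_mult:
  "fps_partial_deriv (unit_index v) (F * G) =
     fps_partial_deriv (unit_index v) F * G + F * fps_partial_deriv (unit_index v) G"
  by (rule fps_ext) (simp add: fps_mult_nth partial_deriv1_mult partial_deriv_sum sum.distrib)

lemma fps_partial_deriv1_power:
  "fps_partial_deriv (unit_index v) (F ^ Suc m) = of_nat (Suc m) * F ^ m * fps_partial_deriv (unit_index v) F"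
  by (induction m) (simp_all add: fps_partial_deriv1_mult algebra_simps)

lemma fps_partial_deriv1_one [simp]: "fps_partial_deriv (unit_index v) 1 = 0"
  by (rule fps_ext) (simp add: partial_deriv1_single flip: single_one)

lemma fps_partial_deriv1_prod_eq_0:
  assumes "\<And>x. x \<in> S \<Longrightarrow> fps_partial_deriv (unit_index v) (F x) = 0"
  shows "fps_partial_deriv (unit_index v) (\<Prod>x\<in>S. F x) = 0"
  using assms by (induction S rule: infinite_finite_induct) (auto simp: fps_partial_deriv1_mult)

lemma fps_partial_deriv1_power_eq_0:
  assumes "fps_partial_deriv (unit_index v) F = 0"
  shows "fps_partial_deriv (unit_index v) (F ^ m) = 0"
  using assms by (induction m) (auto simp: fps_partial_deriv1_mult)

lemma fps_X_power_dvd_fps_partial_deriv: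
  "fps_X ^ n dvd F \<Longrightarrow> fps_X ^ n dvd fps_partial_deriv \<mu> (F :: (('v::finite \<Rightarrow>\<^sub>0 nat) \<Rightarrow>\<^sub>0 'k::comm_ring_1) fps)"
  by (simp add: fps_X_power_dvd_iff)

definition hscalar :: "'k \<Rightarrow> ((('v \<Rightarrow>\<^sub>0 nat) \<Rightarrow>\<^sub>0 'k::comm_semiring_1) fps)" where
  "hscalar c = fps_const (Poly_Mapping.single 0 c)"

lemma hscalar_1 [simp]: "hscalar 1 = 1"
  by (simp add: hscalar_def)

lemma hscalar_mult: "hscalar (c * d) = hscalar c * hscalar d"
  by (simp add: hscalar_def mult_single)

lemma hscalar_prod: "hscalar (\<Prod>x\<in>S. f x) = (\<Prod>x\<in>S. hscalar (f x))"
  by (induction S rule: infinite_finite_induct) (simp_all add: hscalar_mult)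

lemma of_nat_eq_hscalar: "of_nat n = hscalar (of_nat n)"
  by (simp add: hscalar_def fps_of_nat)

lemma fps_partial_deriv1_hscalar [simp]: "fps_partial_deriv (unit_index v) (hscalar c) = 0"
  by (rule fps_ext) (simp add: hscalar_def partial_deriv1_single)

lemma scal_emb_0 [simp]: "scal_emb 0 = 0"
  by (rule fps_ext) (simp add: scal_emb_def)

lemma scal_emb_add: "scal_emb (a + b) = scal_emb a + scal_emb b"
  by (rule fps_ext) (simp add: scal_emb_def single_add)

lemma scal_emb_sum: "scal_emb (\<Sum>x\<in>S. f x) = (\<Sum>x\<in>S. scal_emb (f x))"
  by (induction S rule: infinite_finite_induct) (simp_all add: scal_emb_add)

lemma scal_emb_mult: "scal_emb (a * b) = scal_emb a * scal_emb b"
proof (rule fps_ext)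
  fix n
  have "Poly_Mapping.single 0 (\<Sum>i\<le>n. a $$ i * b $$ (n - i)) =
      (\<Sum>i\<le>n. Poly_Mapping.single 0 (a $$ i) * Poly_Mapping.single 0 (b $$ (n - i)))"
    by (simp add: single_sum mult_single)
  then show "scal_emb (a * b) $$ n = (scal_emb a * scal_emb b) $$ n"
    by (simp add: scal_emb_def fps_mult_nth atLeast0AtMost)
qed

lemma fps_partial_deriv1_scal_emb [simp]: "fps_partial_deriv (unit_index v) (scal_emb c) = 0"
  by (rule fps_ext) (simp add: scal_emb_def partial_deriv1_single)

section \<open>The \<open>h\<close>-adic exponential\<close>

definition exp_trunc :: "nat \<Rightarrow> ('n, 'k::field_char_0) hxp \<Rightarrow> ('n, 'k) hxp" where
  "exp_trunc N y = (\<Sum>m<N. hscalar (inverse (fact m)) * y ^ m)"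

lemma fps_X_power_dvd_hexp_comm_minus_exp_trunc:
  assumes "y $$ 0 = 0"
  shows "fps_X ^ N dvd hexp_comm y - exp_trunc N y"
proof -
  have "hexp_comm y $$ j = exp_trunc N y $$ j" if "j < N" for j
  proof -
    have "exp_trunc N y $$ j = (\<Sum>m<N. Poly_Mapping.single 0 (inverse (fact m)) * (y ^ m) $$ j)"
      by (simp add: exp_trunc_def hscalar_def fps_sum_nth)
    also have "\<dots> = (\<Sum>m\<le>j. Poly_Mapping.single 0 (inverse (fact m)) * (y ^ m) $$ j)"
    proof (rule sum.mono_neutral_right)
      show "\<forall>m\<in>{..<N} - {..j}. Poly_Mapping.single 0 (inverse (fact m)) * (y ^ m) $$ j = 0"
        using fps_X_power_dvd_power[OF assms] by (auto simp: fps_X_power_dvd_iff)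
    qed (use that in auto)
    finally show ?thesis
      by (simp add: hexp_comm_def)
  qed
  then show ?thesis
    by (simp add: fps_X_power_dvd_iff)
qed

lemma hscalar_inverse_fact_binomial:
  assumes "j \<le> m"
  shows "hscalar (inverse (fact m)) * of_nat (m choose j) =
    hscalar (inverse (fact j)) * (hscalar (inverse (fact (m - j))) :: ('v \<Rightarrow>\<^sub>0 nat, 'k::field_char_0) poly_mapping fps)"
proof -
  have "inverse (fact m) * of_nat (m choose j) = (inverse (fact j) * inverse (fact (m - j)) :: 'k)"
    using assms by (simp add: binomial_fact field_simps)
  then show ?thesis
    by (simp add: of_nat_eq_hscalar flip: hscalar_mult)
qed

lemma exp_trunc_add:
  "exp_trunc N (a + b) =
     (\<Sum>(j, k)\<in>{(j, k). j + k < N}. hscalar (inverse (fact j)) * hscalar (inverse (fact k)) * a ^ j * b ^ k)"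
proof -
  have "exp_trunc N (a + b) =
      (\<Sum>m<N. \<Sum>j\<le>m. hscalar (inverse (fact m)) * of_nat (m choose j) * a ^ j * b ^ (m - j))"
    by (simp add: exp_trunc_def binomial_ring sum_distrib_left mult.assoc)
  also have "\<dots> = (\<Sum>m<N. \<Sum>j\<le>m. hscalar (inverse (fact j)) * hscalar (inverse (fact (m - j))) * a ^ j * b ^ (m - j))"
    by (intro sum.cong refl) (simp add: hscalar_inverse_fact_binomial)
  finally show ?thesis
    by (simp add: sum.triangle_reindex)
qed

lemma fps_X_power_dvd_exp_trunc_mult_minus_exp_trunc_add:
  assumes a: "a $$ 0 = 0" and b: "b $$ 0 = 0"
  shows "fps_X ^ N dvd exp_trunc N a * exp_trunc N b - exp_trunc N (a + b)"
proof -
  define t where "t j k = hscalar (inverse (fact j)) * hscalar (inverse (fact k)) * a ^ j * b ^ k" for j k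
  define S where "S = {(j, k). j + k < N}"
  define R where "R = ({..<N} \<times> {..<N}) - S"
  have "exp_trunc N a * exp_trunc N b = (\<Sum>(j, k)\<in>{..<N} \<times> {..<N}. t j k)"
    unfolding exp_trunc_def sum_product sum.cartesian_product by (simp add: t_def mult_ac)
  also have "\<dots> = (\<Sum>(j, k)\<in>R. t j k) + (\<Sum>(j, k)\<in>S. t j k)"
    unfolding R_def by (rule sum.subset_diff) (auto simp: S_def)
  finally have expand: "exp_trunc N a * exp_trunc N b - exp_trunc N (a + b) = (\<Sum>(j, k)\<in>R. t j k)"
    by (simp add: exp_trunc_add S_def t_def)
  have "fps_X ^ N dvd t j k" if "(j, k) \<in> R" for j k
  proof -
    have "fps_X ^ (j + k) dvd a ^ j * b ^ k"
      unfolding power_add by (intro mult_dvd_mono fps_X_power_dvd_power a b)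
    moreover have "fps_X ^ N dvd fps_X ^ (j + k)"
      using that by (intro le_imp_power_dvd) (auto simp: R_def S_def)
    ultimately have "fps_X ^ N dvd a ^ j * b ^ k"
      by (rule dvd_trans[rotated])
    then show ?thesis
      unfolding t_def mult.assoc[of _ _ "b ^ k"] by (rule dvd_mult)
  qed
  then show ?thesis
    unfolding expand by (auto intro: dvd_sum)
qed

lemma hexp_comm_add:
  assumes a: "a $$ 0 = 0" and b: "b $$ 0 = 0"
  shows "hexp_comm (a + b) = hexp_comm a * hexp_comm b"
proof (rule fps_eq_if_X_power_dvd_diff)
  fix N :: nat
  have sum: "fps_X ^ N dvd hexp_comm (a + b) - exp_trunc N (a + b)"
    using a b by (intro fps_X_power_dvd_hexp_comm_minus_exp_trunc) simp
  have trunc: "fps_X ^ N dvd exp_trunc N (a + b) - exp_trunc N a * exp_trunc N b"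
    using fps_X_power_dvd_exp_trunc_mult_minus_exp_trunc_add[OF a b] by (rule dvd_diff_commute)
  have "fps_X ^ N dvd hexp_comm a * hexp_comm b - exp_trunc N a * exp_trunc N b"
    using a b by (intro dvd_diff_mult fps_X_power_dvd_hexp_comm_minus_exp_trunc)
  then have prod: "fps_X ^ N dvd exp_trunc N a * exp_trunc N b - hexp_comm a * hexp_comm b"
    by (rule dvd_diff_commute)
  show "fps_X ^ N dvd hexp_comm (a + b) - hexp_comm a * hexp_comm b"
    using dvd_diff_trans[OF dvd_diff_trans[OF sum trunc] prod] .
qed

lemma hexp_comm_zero [simp]: "hexp_comm 0 = (1 :: ('n, 'k::field_char_0) hxp)"
  by (rule fps_ext) (simp add: hexp_comm_def sum.atMost_shift)

lemma hexp_comm_sum: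
  assumes "\<And>x. x \<in> S \<Longrightarrow> f x $$ 0 = 0"
  shows "hexp_comm (\<Sum>x\<in>S. f x) = (\<Prod>x\<in>S. hexp_comm (f x))"
  using assms
proof (induction S rule: infinite_finite_induct)
  case (insert x S)
  then show ?case
    by (simp add: hexp_comm_add fps_sum_nth)
qed simp_all

lemma fps_partial_deriv1_exp_trunc_Suc:
  "fps_partial_deriv (unit_index v) (exp_trunc (Suc N) y) =
     fps_partial_deriv (unit_index v) y * exp_trunc N y"
proof -
  let ?D = "fps_partial_deriv (unit_index v)"
  let ?c = "\<lambda>m. hscalar (inverse (fact m)) :: ('n, 'k::field_char_0) hxp"
  have c: "?c (Suc m) * of_nat (Suc m) = ?c m" for m
    by (simp add: of_nat_eq_hscalar field_simps del: of_nat_Suc flip: hscalar_mult)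
  have "?D (exp_trunc (Suc N) y) = (\<Sum>m<Suc N. ?c m * ?D (y ^ m))"
    by (simp only: exp_trunc_def fps_partial_deriv_sum fps_partial_deriv1_mult) simp
  also have "\<dots> = (\<Sum>i<N. ?c (Suc i) * ?D (y ^ Suc i))"
    by (simp only: sum.lessThan_Suc_shift power_0 fps_partial_deriv1_one mult_zero_right add_0_left)
  also have "\<dots> = (\<Sum>i<N. ?c i * y ^ i * ?D y)"
    by (simp only: fps_partial_deriv1_power mult.assoc[symmetric] c)
  also have "\<dots> = ?D y * exp_trunc N y"
    by (simp add: exp_trunc_def sum_distrib_left algebra_simps)
  finally show ?thesis .
qed

lemma fps_partial_deriv1_hexp_comm:
  assumes "y $$ 0 = 0"
  shows "fps_partial_deriv (unit_index v) (hexp_comm y) = fps_partial_deriv (unit_index v) y * hexp_comm y"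
proof (rule fps_eq_if_X_power_dvd_diff)
  fix N :: nat
  let ?D = "fps_partial_deriv (unit_index v)"
  have "fps_X ^ N dvd fps_X ^ Suc N"
    by (simp add: le_imp_power_dvd)
  then have "fps_X ^ N dvd hexp_comm y - exp_trunc (Suc N) y"
    using fps_X_power_dvd_hexp_comm_minus_exp_trunc[OF assms] by (rule dvd_trans)
  then have "fps_X ^ N dvd ?D (hexp_comm y - exp_trunc (Suc N) y)"
    by (rule fps_X_power_dvd_fps_partial_deriv)
  then have "fps_X ^ N dvd ?D (hexp_comm y) - ?D y * exp_trunc N y"
    by (simp add: fps_partial_deriv_diff fps_partial_deriv1_exp_trunc_Suc)
  moreover have "fps_X ^ N dvd ?D y * (exp_trunc N y - hexp_comm y)"
    using dvd_diff_commute[OF fps_X_power_dvd_hexp_comm_minus_exp_trunc[OF assms]] by (rule dvd_mult)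
  then have "fps_X ^ N dvd ?D y * exp_trunc N y - ?D y * hexp_comm y"
    by (simp only: right_diff_distrib)
  ultimately show "fps_X ^ N dvd ?D (hexp_comm y) - ?D y * hexp_comm y"
    by (rule dvd_diff_trans)
qed

lemma fps_partial_deriv_hexp_comm:
  fixes y :: "('n::finite, 'k::field_char_0) hxp"
  assumes y0: "y $$ 0 = 0"
    and second: "\<And>w w'. w \<in> S \<Longrightarrow> w' \<in> S \<Longrightarrow>
      fps_partial_deriv (unit_index w) (fps_partial_deriv (unit_index w') y) = 0"
    and support: "\<And>w. w \<notin> S \<Longrightarrow> \<mu> w = 0"
  shows "fps_partial_deriv \<mu> (hexp_comm y) =
    (\<Prod>w\<in>UNIV. fps_partial_deriv (unit_index w) y ^ \<mu> w) * hexp_comm y"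
  using support
proof (induction \<mu> rule: finite_nat_fun_induct)
  case zero
  then show ?case
    by simp
next
  case (incr \<mu> v)
  let ?D = "\<lambda>w. fps_partial_deriv (unit_index w)"
  let ?P = "\<Prod>w\<in>UNIV. ?D w y ^ \<mu> w"
  have v: "v \<in> S"
    using incr.prems[of v] by auto
  have support_\<mu>: "\<mu> w = 0" if "w \<notin> S" for w
    using incr.prems[of w] that by (auto split: if_splits)
  have "?D v (?D w y ^ \<mu> w) = 0" for w
    using second[OF v, of w] support_\<mu>[of w]
    by (cases "\<mu> w = 0") (auto intro: fps_partial_deriv1_power_eq_0)
  then have P_const: "?D v ?P = 0"
    by (rule fps_partial_deriv1_prod_eq_0)
  have "(\<lambda>w. unit_index v w + \<mu> w) = \<mu>(v := Suc (\<mu> v))"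
    by (auto simp: unit_index_def)
  then have "fps_partial_deriv (\<mu>(v := Suc (\<mu> v))) (hexp_comm y) = ?D v (fps_partial_deriv \<mu> (hexp_comm y))"
    by (simp add: fps_partial_deriv_fps_partial_deriv)
  also have "\<dots> = ?D v (?P * hexp_comm y)"
    using incr.IH support_\<mu> by simp
  also have "\<dots> = ?P * ?D v y * hexp_comm y"
    by (simp add: fps_partial_deriv1_mult fps_partial_deriv1_hexp_comm[OF y0] P_const mult.assoc)
  also have "?P * ?D v y = (\<Prod>w\<in>UNIV. ?D w y ^ (\<mu>(v := Suc (\<mu> v))) w)"
    by (rule prod_power_fun_upd_Suc[symmetric])
  finally show ?case .
qed

lemma prod_exp_trunc_eq_sum_PiE:
  fixes w :: "'n::finite \<Rightarrow> ('n, 'k::field_char_0) hxp"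
  shows "(\<Prod>l\<in>UNIV. exp_trunc B (w l)) =
    (\<Sum>\<kappa>\<in>Pi\<^sub>E UNIV (\<lambda>_. {..<B}). hscalar (inverse (\<Prod>l\<in>UNIV. fact (\<kappa> l))) * (\<Prod>l\<in>UNIV. w l ^ \<kappa> l))"
  unfolding exp_trunc_def
  by (subst prod_sum_PiE) (simp_all add: prod.distrib hscalar_prod o_def flip: prod_inversef)

section \<open>The Weyl product as a bidifferential operator\<close>

fun p_multiindex :: "('n \<Rightarrow> nat) \<Rightarrow> 'n + 'n \<Rightarrow> nat" where
  "p_multiindex \<kappa> (Inl _) = 0"
| "p_multiindex \<kappa> (Inr l) = \<kappa> l"

fun x_multiindex :: "('n \<Rightarrow> nat) \<Rightarrow> 'n + 'n \<Rightarrow> nat" where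
  "x_multiindex \<kappa> (Inl k) = \<kappa> k"
| "x_multiindex \<kappa> (Inr _) = 0"

lemma partial_deriv_p_multiindex_single:
  "partial_deriv (p_multiindex \<kappa>) (Poly_Mapping.single a c) =
    (if \<forall>l. \<kappa> l \<le> Poly_Mapping.lookup a (Inr l)
     then Poly_Mapping.single (a - pm_of_fun (p_multiindex \<kappa>))
       (of_nat (\<Prod>l\<in>UNIV. fact (\<kappa> l) * (Poly_Mapping.lookup a (Inr l) choose \<kappa> l)) * c)
     else 0)"
proof -
  have "(\<forall>v. p_multiindex \<kappa> v \<le> Poly_Mapping.lookup a v) \<longleftrightarrow> (\<forall>l. \<kappa> l \<le> Poly_Mapping.lookup a (Inr l))"
    by (metis p_multiindex.simps sum.exhaust zero_le)
  moreover have "(\<forall>l. \<kappa> l \<le> Poly_Mapping.lookup a (Inr l)) \<Longrightarrow>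
      (\<Prod>v\<in>UNIV. pochhammer (Poly_Mapping.lookup a v - p_multiindex \<kappa> v + 1) (p_multiindex \<kappa> v)) =
      (\<Prod>l\<in>UNIV. fact (\<kappa> l) * (Poly_Mapping.lookup a (Inr l) choose \<kappa> l))"
    by (simp add: prod_UNIV_sum pochhammer_eq_fact_binomial)
  ultimately show ?thesis
    by (simp add: partial_deriv_single)
qed

lemma partial_deriv_x_multiindex_single:
  "partial_deriv (x_multiindex \<kappa>) (Poly_Mapping.single a c) =
    (if \<forall>k. \<kappa> k \<le> Poly_Mapping.lookup a (Inl k)
     then Poly_Mapping.single (a - pm_of_fun (x_multiindex \<kappa>))
       (of_nat (\<Prod>k\<in>UNIV. fact (\<kappa> k) * (Poly_Mapping.lookup a (Inl k) choose \<kappa> k)) * c)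
     else 0)"
proof -
  have "(\<forall>v. x_multiindex \<kappa> v \<le> Poly_Mapping.lookup a v) \<longleftrightarrow> (\<forall>k. \<kappa> k \<le> Poly_Mapping.lookup a (Inl k))"
    by (metis x_multiindex.simps sum.exhaust zero_le)
  moreover have "(\<forall>k. \<kappa> k \<le> Poly_Mapping.lookup a (Inl k)) \<Longrightarrow>
      (\<Prod>v\<in>UNIV. pochhammer (Poly_Mapping.lookup a v - x_multiindex \<kappa> v + 1) (x_multiindex \<kappa> v)) =
      (\<Prod>k\<in>UNIV. fact (\<kappa> k) * (Poly_Mapping.lookup a (Inl k) choose \<kappa> k))"
    by (simp add: prod_UNIV_sum pochhammer_eq_fact_binomial)
  ultimately show ?thesis
    by (simp add: partial_deriv_single)
qed

lemma weyl_res_mono_eq_diff: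
  assumes "\<kappa> \<in> weyl_kappas a b"
  shows "a - pm_of_fun (p_multiindex \<kappa>) + (b - pm_of_fun (x_multiindex \<kappa>)) = weyl_res_mono a b \<kappa>"
proof (rule poly_mapping_eqI)
  fix v
  show "Poly_Mapping.lookup (a - pm_of_fun (p_multiindex \<kappa>) + (b - pm_of_fun (x_multiindex \<kappa>))) v =
      Poly_Mapping.lookup (weyl_res_mono a b \<kappa>) v"
    using assms
    by (cases v) (simp_all add: weyl_kappas_def lookup_add lookup_minus weyl_res_mono_def lookup_sum
        lookup_single when_def)
qed

lemma of_nat_weyl_coeff_eq:
  "inverse (\<Prod>l\<in>UNIV. fact (\<kappa> l)) *
     of_nat (\<Prod>l\<in>UNIV. fact (\<kappa> l) * (Poly_Mapping.lookup a (Inr l) choose \<kappa> l)) *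
     of_nat (\<Prod>l\<in>UNIV. fact (\<kappa> l) * (Poly_Mapping.lookup b (Inl l) choose \<kappa> l)) =
   (of_nat (weyl_coeff a b \<kappa>) :: 'k::field_char_0)"
proof -
  have "inverse (\<Prod>l\<in>UNIV. fact (\<kappa> l)) *
      (\<Prod>l\<in>UNIV. fact (\<kappa> l) * of_nat (Poly_Mapping.lookup a (Inr l) choose \<kappa> l)) *
      (\<Prod>l\<in>UNIV. fact (\<kappa> l) * of_nat (Poly_Mapping.lookup b (Inl l) choose \<kappa> l)) =
      (\<Prod>l\<in>UNIV. fact (\<kappa> l) * of_nat (Poly_Mapping.lookup a (Inr l) choose \<kappa> l) *
         of_nat (Poly_Mapping.lookup b (Inl l) choose \<kappa> l) :: 'k)"
    by (simp add: prod.distrib field_simps)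
  then show ?thesis
    by (simp add: weyl_coeff_def of_nat_prod)
qed

lemma weyl_term_eq_partial_derivs:
  fixes c d :: "'k::field_char_0"
  shows "Poly_Mapping.single 0 (inverse (\<Prod>l\<in>UNIV. fact (\<kappa> l))) *
      partial_deriv (p_multiindex \<kappa>) (Poly_Mapping.single a c) *
      partial_deriv (x_multiindex \<kappa>) (Poly_Mapping.single b d) =
    (if \<kappa> \<in> weyl_kappas a b
     then Poly_Mapping.single (weyl_res_mono a b \<kappa>) (c * d * of_nat (weyl_coeff a b \<kappa>))
     else (0 :: ('n::finite, 'k) xppoly))"
proof (cases "\<kappa> \<in> weyl_kappas a b")
  case True
  then have "\<forall>l. \<kappa> l \<le> Poly_Mapping.lookup a (Inr l)" "\<forall>l. \<kappa> l \<le> Poly_Mapping.lookup b (Inl l)"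
    by (auto simp: weyl_kappas_def)
  with True show ?thesis
    by (simp add: partial_deriv_p_multiindex_single partial_deriv_x_multiindex_single mult_single
        weyl_res_mono_eq_diff flip: of_nat_weyl_coeff_eq) (simp add: algebra_simps)
next
  case False
  then have "\<not> (\<forall>l. \<kappa> l \<le> Poly_Mapping.lookup a (Inr l)) \<or> \<not> (\<forall>l. \<kappa> l \<le> Poly_Mapping.lookup b (Inl l))"
    by (auto simp: weyl_kappas_def)
  with False show ?thesis
    by (auto simp: partial_deriv_p_multiindex_single partial_deriv_x_multiindex_single)
qed

lemma sum_weyl_terms_eq_sum_partial_derivs:
  fixes c d :: "'k::field_char_0"
  assumes "\<And>l. Poly_Mapping.lookup a (Inr l) < B"
  shows "(\<Sum>\<kappa>\<in>Pi\<^sub>E UNIV (\<lambda>_. {..<B}). Poly_Mapping.single 0 (inverse (\<Prod>l\<in>UNIV. fact (\<kappa> l))) *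
      partial_deriv (p_multiindex \<kappa>) (Poly_Mapping.single a c) *
      partial_deriv (x_multiindex \<kappa>) (Poly_Mapping.single b d)) =
    (\<Sum>\<kappa>\<in>weyl_kappas a b.
      Poly_Mapping.single (weyl_res_mono a b \<kappa>) (c * d * of_nat (weyl_coeff a b \<kappa>)) :: ('n::finite, 'k) xppoly)"
proof -
  have "weyl_kappas a b \<subseteq> Pi\<^sub>E UNIV (\<lambda>_. {..<B})"
    using assms by (auto simp: weyl_kappas_def intro: le_less_trans)
  then have "Pi\<^sub>E UNIV (\<lambda>_. {..<B}) \<inter> weyl_kappas a b = weyl_kappas a b"
    by (rule Int_absorb1)
  then show ?thesis
    by (simp add: weyl_term_eq_partial_derivs finite_PiE flip: sum.inter_restrict)
qed

lemma weyl_poly_mult_eq_sum_partial_derivs: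
  fixes f g :: "('n::finite, 'k::field_char_0) xppoly"
  assumes bound: "\<And>a l. a \<in> Poly_Mapping.keys f \<Longrightarrow> Poly_Mapping.lookup a (Inr l) < B"
  shows "weyl_poly_mult f g =
    (\<Sum>\<kappa>\<in>Pi\<^sub>E UNIV (\<lambda>_. {..<B}). Poly_Mapping.single 0 (inverse (\<Prod>l\<in>UNIV. fact (\<kappa> l))) *
       (partial_deriv (p_multiindex \<kappa>) f * partial_deriv (x_multiindex \<kappa>) g))"
proof -
  let ?K = "Pi\<^sub>E UNIV (\<lambda>_. {..<B}) :: ('n \<Rightarrow> nat) set"
  let ?c = "\<lambda>\<kappa>. Poly_Mapping.single 0 (inverse (\<Prod>l\<in>UNIV. fact (\<kappa> l))) :: ('n, 'k) xppoly"
  let ?f = "\<lambda>a. Poly_Mapping.single a (Poly_Mapping.lookup f a)"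
  let ?g = "\<lambda>b. Poly_Mapping.single b (Poly_Mapping.lookup g b)"
  let ?t = "\<lambda>\<kappa> a b. ?c \<kappa> * partial_deriv (p_multiindex \<kappa>) (?f a) * partial_deriv (x_multiindex \<kappa>) (?g b)"
  have f: "partial_deriv \<mu> f = (\<Sum>a\<in>Poly_Mapping.keys f. partial_deriv \<mu> (?f a))"
    and g: "partial_deriv \<mu> g = (\<Sum>b\<in>Poly_Mapping.keys g. partial_deriv \<mu> (?g b))" for \<mu>
    by (simp_all only: partial_deriv_sum[symmetric] poly_mapping_sum_single[symmetric])
  have "partial_deriv (p_multiindex \<kappa>) f * partial_deriv (x_multiindex \<kappa>) g =
      (\<Sum>a\<in>Poly_Mapping.keys f. \<Sum>b\<in>Poly_Mapping.keys g.
         partial_deriv (p_multiindex \<kappa>) (?f a) * partial_deriv (x_multiindex \<kappa>) (?g b))" for \<kappa>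
    by (simp only: f g sum_product)
  then have "(\<Sum>\<kappa>\<in>?K. ?c \<kappa> * (partial_deriv (p_multiindex \<kappa>) f * partial_deriv (x_multiindex \<kappa>) g)) =
      (\<Sum>\<kappa>\<in>?K. \<Sum>a\<in>Poly_Mapping.keys f. \<Sum>b\<in>Poly_Mapping.keys g. ?t \<kappa> a b)"
    by (simp add: sum_distrib_left mult.assoc)
  also have "\<dots> = (\<Sum>a\<in>Poly_Mapping.keys f. \<Sum>b\<in>Poly_Mapping.keys g. \<Sum>\<kappa>\<in>?K. ?t \<kappa> a b)"
    by (subst sum.swap) (simp add: sum.swap[of _ ?K])
  also have "\<dots> = weyl_poly_mult f g"
    unfolding weyl_poly_mult_def
    by (rule sum.cong[OF refl], rule sum.cong[OF refl], rule sum_weyl_terms_eq_sum_partial_derivs, erule bound)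
  finally show ?thesis ..
qed

lemma weyl_mult_nth_eq_sum_partial_derivs:
  fixes F G :: "('n::finite, 'k::field_char_0) hxp"
  assumes bound: "\<And>i a l. i \<le> d \<Longrightarrow> a \<in> Poly_Mapping.keys (F $$ i) \<Longrightarrow> Poly_Mapping.lookup a (Inr l) < B"
  shows "weyl_mult F G $$ d =
    (\<Sum>\<kappa>\<in>Pi\<^sub>E UNIV (\<lambda>_. {..<B}). hscalar (inverse (\<Prod>l\<in>UNIV. fact (\<kappa> l))) *
       (fps_partial_deriv (p_multiindex \<kappa>) F * fps_partial_deriv (x_multiindex \<kappa>) G)) $$ d"
proof -
  let ?K = "Pi\<^sub>E UNIV (\<lambda>_. {..<B}) :: ('n \<Rightarrow> nat) set"
  let ?c = "\<lambda>\<kappa>. Poly_Mapping.single 0 (inverse (\<Prod>l\<in>UNIV. fact (\<kappa> l))) :: ('n, 'k) xppoly"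
  have "weyl_mult F G $$ d = (\<Sum>i\<le>d. weyl_poly_mult (F $$ i) (G $$ (d - i)))"
    by (simp add: weyl_mult_def)
  also have "\<dots> = (\<Sum>i\<le>d. \<Sum>\<kappa>\<in>?K.
      ?c \<kappa> * (partial_deriv (p_multiindex \<kappa>) (F $$ i) * partial_deriv (x_multiindex \<kappa>) (G $$ (d - i))))"
    using bound by (intro sum.cong refl weyl_poly_mult_eq_sum_partial_derivs) auto
  also have "\<dots> = (\<Sum>\<kappa>\<in>?K. \<Sum>i\<le>d.
      ?c \<kappa> * (partial_deriv (p_multiindex \<kappa>) (F $$ i) * partial_deriv (x_multiindex \<kappa>) (G $$ (d - i))))"
    by (rule sum.swap)
  also have "\<dots> = (\<Sum>\<kappa>\<in>?K. hscalar (inverse (\<Prod>l\<in>UNIV. fact (\<kappa> l))) *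
       (fps_partial_deriv (p_multiindex \<kappa>) F * fps_partial_deriv (x_multiindex \<kappa>) G)) $$ d"
    unfolding fps_sum_nth hscalar_def fps_mult_left_const_nth
    by (simp add: fps_mult_nth atLeast0AtMost sum_distrib_left)
  finally show ?thesis .
qed

lemma exists_p_degree_bound:
  fixes F :: "('n::finite, 'k::zero) hxp"
  shows "\<exists>B>d. \<forall>i\<le>d. \<forall>a\<in>Poly_Mapping.keys (F $$ i). \<forall>l. Poly_Mapping.lookup a (Inr l) < B"
proof -
  define V where "V = (\<lambda>(a, l). Poly_Mapping.lookup a (Inr l)) ` ((\<Union>i\<le>d. Poly_Mapping.keys (F $$ i)) \<times> UNIV)"
  have "finite V"
    by (simp add: V_def)
  then have max: "x \<le> Max (insert d V)" if "x \<in> insert d V" for x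
    using that by simp
  show ?thesis
  proof (intro exI conjI allI impI ballI)
    show "d < Suc (Max (insert d V))"
      using max by (simp add: less_Suc_eq_le)
    fix i a l
    assume "i \<le> d" "a \<in> Poly_Mapping.keys (F $$ i)"
    then have "Poly_Mapping.lookup a (Inr l) \<in> insert d V"
      by (force simp: V_def)
    then show "Poly_Mapping.lookup a (Inr l) < Suc (Max (insert d V))"
      using max by (simp add: less_Suc_eq_le)
  qed
qed

section \<open>Exponentials of normally ordered quadratic forms\<close>

definition xvar :: "'n \<Rightarrow> ('n, 'k::comm_ring_1) hxp" where
  "xvar k = fps_const (Poly_Mapping.single (Poly_Mapping.single (Inl k) 1) 1)"

definition pvar :: "'n \<Rightarrow> ('n, 'k::comm_ring_1) hxp" where
  "pvar l = fps_const (Poly_Mapping.single (Poly_Mapping.single (Inr l) 1) 1)"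

lemma xp_mono_eq: "xp_mono k l = xvar k * pvar l"
  by (simp add: xp_mono_def xvar_def pvar_def mult_single)

lemma fps_partial_deriv1_xvar:
  "fps_partial_deriv (unit_index v) (xvar k :: ('n::finite, 'k::comm_ring_1) hxp) = (if v = Inl k then 1 else 0)"
  by (rule fps_ext) (auto simp: xvar_def partial_deriv1_single lookup_single)

lemma fps_partial_deriv1_pvar:
  "fps_partial_deriv (unit_index v) (pvar l :: ('n::finite, 'k::comm_ring_1) hxp) = (if v = Inr l then 1 else 0)"
  by (rule fps_ext) (auto simp: pvar_def partial_deriv1_single lookup_single)

definition xp_form :: "('n::finite \<Rightarrow> 'n \<Rightarrow> 'k::comm_ring_1 fps) \<Rightarrow> ('n, 'k) hxp" where
  "xp_form M = (\<Sum>k\<in>UNIV. \<Sum>l\<in>UNIV. xp_mono k l * scal_emb (M k l))"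

definition x_row :: "('n::finite \<Rightarrow> 'n \<Rightarrow> 'k::comm_ring_1 fps) \<Rightarrow> 'n \<Rightarrow> ('n, 'k) hxp" where
  "x_row M l = (\<Sum>k\<in>UNIV. xvar k * scal_emb (M k l))"

definition p_col :: "('n::finite \<Rightarrow> 'n \<Rightarrow> 'k::comm_ring_1 fps) \<Rightarrow> 'n \<Rightarrow> ('n, 'k) hxp" where
  "p_col M k = (\<Sum>l\<in>UNIV. pvar l * scal_emb (M k l))"

lemma quad_form_eq_xp_form: "quad_form A = xp_form (\<lambda>k l. (A - mat 1) $ k $ l)"
  by (simp add: quad_form_def xp_form_def)

lemma xp_form_nth_0: "(\<And>k l. M k l $$ 0 = 0) \<Longrightarrow> xp_form M $$ 0 = 0"
  by (simp add: xp_form_def fps_sum_nth scal_emb_def)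

lemma x_row_nth_0: "(\<And>k l. M k l $$ 0 = 0) \<Longrightarrow> x_row M l $$ 0 = 0"
  by (simp add: x_row_def fps_sum_nth scal_emb_def)

lemma xp_form_add: "xp_form (\<lambda>k l. M k l + N k l) = xp_form M + xp_form N"
  by (simp add: xp_form_def scal_emb_add distrib_left sum.distrib)

lemma fps_partial_deriv_p_xp_form:
  "fps_partial_deriv (unit_index (Inr l)) (xp_form M :: ('n::finite, 'k::comm_ring_1) hxp) = x_row M l"
proof -
  have "fps_partial_deriv (unit_index (Inr l)) (xp_mono k j * scal_emb c :: ('n, 'k) hxp) =
      (if j = l then xvar k * scal_emb c else 0)" for k j c
    by (simp add: fps_partial_deriv1_mult xp_mono_eq fps_partial_deriv1_xvar fps_partial_deriv1_pvar)
  then show ?thesis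
    by (simp add: xp_form_def x_row_def fps_partial_deriv_sum)
qed

lemma fps_partial_deriv_x_xp_form:
  "fps_partial_deriv (unit_index (Inl k)) (xp_form M :: ('n::finite, 'k::comm_ring_1) hxp) = p_col M k"
proof -
  have "fps_partial_deriv (unit_index (Inl k)) (xp_mono i l * scal_emb c :: ('n, 'k) hxp) =
      (if i = k then pvar l * scal_emb c else 0)" for i l c
    by (simp add: fps_partial_deriv1_mult xp_mono_eq fps_partial_deriv1_xvar fps_partial_deriv1_pvar)
  then have "fps_partial_deriv (unit_index (Inl k)) (xp_form M) =
      (\<Sum>i\<in>UNIV. \<Sum>l\<in>UNIV. if i = k then pvar l * scal_emb (M i l) else (0 :: ('n, 'k) hxp))"
    by (simp add: xp_form_def fps_partial_deriv_sum)
  also have "\<dots> = (\<Sum>l\<in>UNIV. \<Sum>i\<in>UNIV. if i = k then pvar l * scal_emb (M i l) else 0)"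
    by (rule sum.swap)
  finally show ?thesis
    by (simp add: p_col_def)
qed

lemma fps_partial_deriv_p_x_row:
  "fps_partial_deriv (unit_index (Inr l')) (x_row M l :: ('n::finite, 'k::comm_ring_1) hxp) = 0"
  by (simp add: x_row_def fps_partial_deriv_sum fps_partial_deriv1_mult fps_partial_deriv1_xvar)

lemma fps_partial_deriv_x_p_col:
  "fps_partial_deriv (unit_index (Inl k')) (p_col M k :: ('n::finite, 'k::comm_ring_1) hxp) = 0"
  by (simp add: p_col_def fps_partial_deriv_sum fps_partial_deriv1_mult fps_partial_deriv1_pvar)

lemma sum_x_row_mult_p_col:
  "(\<Sum>l\<in>UNIV. x_row M l * p_col N l) = xp_form (\<lambda>k j. \<Sum>l\<in>UNIV. M k l * N l j)"
proof -
  have "(\<Sum>l\<in>UNIV. x_row M l * p_col N l) =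
      (\<Sum>l\<in>UNIV. \<Sum>k\<in>UNIV. \<Sum>j\<in>UNIV. xvar k * pvar j * (scal_emb (M k l) * scal_emb (N l j)))"
    unfolding x_row_def p_col_def sum_product by (intro sum.cong refl) (simp add: mult_ac)
  also have "\<dots> = (\<Sum>k\<in>UNIV. \<Sum>l\<in>UNIV. \<Sum>j\<in>UNIV. xvar k * pvar j * (scal_emb (M k l) * scal_emb (N l j)))"
    by (rule sum.swap)
  also have "\<dots> = (\<Sum>k\<in>UNIV. \<Sum>j\<in>UNIV. \<Sum>l\<in>UNIV. xvar k * pvar j * (scal_emb (M k l) * scal_emb (N l j)))"
    by (rule sum.cong[OF refl], rule sum.swap)
  also have "\<dots> = xp_form (\<lambda>k j. \<Sum>l\<in>UNIV. M k l * N l j)"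
    by (simp add: xp_form_def xp_mono_eq scal_emb_sum scal_emb_mult sum_distrib_left)
  finally show ?thesis .
qed

lemma fps_partial_deriv_p_hexp_xp_form:
  fixes M :: "'n::finite \<Rightarrow> 'n \<Rightarrow> 'k::field_char_0 fps"
  assumes "\<And>k l. M k l $$ 0 = 0"
  shows "fps_partial_deriv (p_multiindex \<kappa>) (hexp_comm (xp_form M)) =
    (\<Prod>l\<in>UNIV. x_row M l ^ \<kappa> l) * hexp_comm (xp_form M)"
proof -
  have "fps_partial_deriv (p_multiindex \<kappa>) (hexp_comm (xp_form M)) =
      (\<Prod>w\<in>UNIV. fps_partial_deriv (unit_index w) (xp_form M) ^ p_multiindex \<kappa> w) * hexp_comm (xp_form M)"
  proof (rule fps_partial_deriv_hexp_comm[where S = "range Inr"])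
    show "xp_form M $$ 0 = 0"
      using assms by (rule xp_form_nth_0)
  next
    fix w :: "'n + 'n"
    assume "w \<notin> range Inr"
    then show "p_multiindex \<kappa> w = 0"
      by (cases w) auto
  qed (auto simp: fps_partial_deriv_p_xp_form fps_partial_deriv_p_x_row)
  then show ?thesis
    by (simp add: prod_UNIV_sum fps_partial_deriv_p_xp_form)
qed

lemma fps_partial_deriv_x_hexp_xp_form:
  fixes N :: "'n::finite \<Rightarrow> 'n \<Rightarrow> 'k::field_char_0 fps"
  assumes "\<And>k l. N k l $$ 0 = 0"
  shows "fps_partial_deriv (x_multiindex \<kappa>) (hexp_comm (xp_form N)) =
    (\<Prod>k\<in>UNIV. p_col N k ^ \<kappa> k) * hexp_comm (xp_form N)"
proof -
  have "fps_partial_deriv (x_multiindex \<kappa>) (hexp_comm (xp_form N)) =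
      (\<Prod>w\<in>UNIV. fps_partial_deriv (unit_index w) (xp_form N) ^ x_multiindex \<kappa> w) * hexp_comm (xp_form N)"
  proof (rule fps_partial_deriv_hexp_comm[where S = "range Inl"])
    show "xp_form N $$ 0 = 0"
      using assms by (rule xp_form_nth_0)
  next
    fix w :: "'n + 'n"
    assume "w \<notin> range Inl"
    then show "x_multiindex \<kappa> w = 0"
      by (cases w) auto
  qed (auto simp: fps_partial_deriv_x_xp_form fps_partial_deriv_x_p_col)
  then show ?thesis
    by (simp add: prod_UNIV_sum fps_partial_deriv_x_xp_form)
qed

lemma hexp_comm_xp_form_matrix_product:
  fixes M N :: "'n::finite \<Rightarrow> 'n \<Rightarrow> 'k::field_char_0 fps"
  assumes M0: "\<And>k l. M k l $$ 0 = 0" and N0: "\<And>k l. N k l $$ 0 = 0"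
  shows "hexp_comm (xp_form (\<lambda>k j. M k j + N k j + (\<Sum>l\<in>UNIV. M k l * N l j))) =
    (\<Prod>l\<in>UNIV. hexp_comm (x_row M l * p_col N l)) * (hexp_comm (xp_form M) * hexp_comm (xp_form N))"
proof -
  have "x_row M l $$ 0 = 0" for l
    by (rule x_row_nth_0) (rule M0)
  then have w0: "(x_row M l * p_col N l) $$ 0 = 0" for l
    by simp
  have "xp_form M $$ 0 = 0" "xp_form N $$ 0 = 0"
    by (rule xp_form_nth_0, rule M0) (rule xp_form_nth_0, rule N0)
  moreover have "(\<Sum>l\<in>UNIV. x_row M l * p_col N l) $$ 0 = 0"
    using w0 by (simp add: fps_sum_nth)
  ultimately show ?thesis
    using w0 by (simp add: xp_form_add hexp_comm_add hexp_comm_sum mult_ac flip: sum_x_row_mult_p_col)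
qed

lemma weyl_mult_hexp_xp_form:
  fixes M N :: "'n::finite \<Rightarrow> 'n \<Rightarrow> 'k::field_char_0 fps"
  assumes M0: "\<And>k l. M k l $$ 0 = 0" and N0: "\<And>k l. N k l $$ 0 = 0"
  shows "weyl_mult (hexp_comm (xp_form M)) (hexp_comm (xp_form N)) =
    hexp_comm (xp_form (\<lambda>k j. M k j + N k j + (\<Sum>l\<in>UNIV. M k l * N l j)))"
proof (rule fps_ext)
  fix d
  let ?F = "hexp_comm (xp_form M)" and ?G = "hexp_comm (xp_form N)"
  define w where "w l = x_row M l * p_col N l" for l
  have w0: "w l $$ 0 = 0" for l
    using x_row_nth_0[of M l] M0 by (simp add: w_def)
  \<comment> \<open>\<open>B > d\<close>: truncating the exponentials below order \<open>B\<close> leaves the coefficient of \<open>h\<^sup>d\<close> intact\<close>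
  obtain B where "d < B" and bound: "\<forall>i\<le>d. \<forall>a\<in>Poly_Mapping.keys (?F $$ i). \<forall>l. Poly_Mapping.lookup a (Inr l) < B"
    using exists_p_degree_bound by blast
  let ?K = "Pi\<^sub>E UNIV (\<lambda>_. {..<B}) :: ('n \<Rightarrow> nat) set"
  let ?c = "\<lambda>\<kappa>. hscalar (inverse (\<Prod>l\<in>UNIV. fact (\<kappa> l))) :: ('n, 'k) hxp"
  have "weyl_mult ?F ?G $$ d =
      (\<Sum>\<kappa>\<in>?K. ?c \<kappa> * (fps_partial_deriv (p_multiindex \<kappa>) ?F * fps_partial_deriv (x_multiindex \<kappa>) ?G)) $$ d"
    using bound by (intro weyl_mult_nth_eq_sum_partial_derivs) auto
  also have "\<dots> = ((\<Sum>\<kappa>\<in>?K. ?c \<kappa> * (\<Prod>l\<in>UNIV. w l ^ \<kappa> l)) * (?F * ?G)) $$ d"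
    by (simp add: M0 N0 fps_partial_deriv_p_hexp_xp_form fps_partial_deriv_x_hexp_xp_form
        w_def power_mult_distrib prod.distrib sum_distrib_left mult_ac)
  also have "\<dots> = ((\<Prod>l\<in>UNIV. hexp_comm (w l)) * (?F * ?G)) $$ d"
  proof (rule fps_mult_nth_eq_if_X_power_dvd_diff[OF _ \<open>d < B\<close>])
    show "fps_X ^ B dvd (\<Sum>\<kappa>\<in>?K. ?c \<kappa> * (\<Prod>l\<in>UNIV. w l ^ \<kappa> l)) - (\<Prod>l\<in>UNIV. hexp_comm (w l))"
      unfolding prod_exp_trunc_eq_sum_PiE[symmetric]
      by (intro dvd_diff_prod dvd_diff_commute[OF fps_X_power_dvd_hexp_comm_minus_exp_trunc] w0)
  qed
  also have "\<dots> = hexp_comm (xp_form (\<lambda>k j. M k j + N k j + (\<Sum>l\<in>UNIV. M k l * N l j))) $$ d"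
    by (simp add: w_def hexp_comm_xp_form_matrix_product M0 N0)
  finally show "weyl_mult ?F ?G $$ d = \<dots>" .
qed

lemma matrix_mult_minus_1:
  fixes A B :: "'a::comm_ring_1 ^ 'n::finite ^ 'n"
  shows "(A ** B - mat 1) $ k $ j = (A - mat 1) $ k $ j + (B - mat 1) $ k $ j
           + (\<Sum>l\<in>UNIV. (A - mat 1) $ k $ l * (B - mat 1) $ l $ j)"
proof -
  have one: "(mat 1 :: 'a ^ 'n ^ 'n) $ a $ b = (if a = b then 1 else 0)" for a b
    by (simp add: mat_def)
  have "(\<Sum>l\<in>UNIV. (A - mat 1) $ k $ l * (B - mat 1) $ l $ j) =
      (\<Sum>l\<in>UNIV. A $ k $ l * B $ l $ j - (if l = j then A $ k $ l else 0) - (if k = l then B $ l $ j else 0)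
        + (if k = l then (if l = j then 1 else 0) else 0))"
    by (intro sum.cong refl) (simp add: one algebra_simps)
  also have "\<dots> = (A ** B) $ k $ j - A $ k $ j - B $ k $ j + (if k = j then 1 else 0)"
    by (simp add: sum.distrib sum_subtractf matrix_matrix_mult_def)
  finally show ?thesis
    by (simp add: one algebra_simps)
qed

lemma weyl_mult_phi:
  fixes A B :: "'k::field_char_0 fps ^ 'n::finite ^ 'n"
  assumes "\<And>k l. (A - mat 1) $ k $ l $$ 0 = 0" and "\<And>k l. (B - mat 1) $ k $ l $$ 0 = 0"
  shows "weyl_mult (phi A) (phi B) = phi (A ** B)"
  unfolding phi_def normal_order_def quad_form_eq_xp_form matrix_mult_minus_1
  using assms by (rule weyl_mult_hexp_xp_form)

lemma exp_hmat_minus_1_nth_0: "(exp_hmat X - mat 1) $ k $ l $$ 0 = 0"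
  by (simp add: exp_hmat_def)

theorem theorem3p10:
  fixes X Y :: "'k::field_char_0 fps ^ 'n::finite ^ 'n"
  shows "weyl_mult (phi (exp_hmat X)) (phi (exp_hmat Y)) = phi (exp_hmat X ** exp_hmat Y)"
  by (intro weyl_mult_phi exp_hmat_minus_1_nth_0)

end
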